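(* Let $p\in\mathbb P^2(\mathbb R)$ and let $l$ be a real line through $p$; fix affine coordinates centered at $p$ in which $l=\{y=0\}$. Let $f\in F_{(p,l)}$ and $g\in I_{(p,l)}$. If $\operatorname{ord}_p(f)=2$ and $D_f''(0)\neq0$, then there exist a neighborhood $U\subseteq\mathbb P^2(\mathbb R)$ of $p$ and $\epsilon>0$ such that $f+\epsilon g$ is nonnegative on $U$.
   Context: $H_k\subseteq\mathbb R[x,y,z]$ is the space of real ternary forms of degree $k$; $P_{3,4}=\{f\in H_4: f\ge0 \text{ on }\mathbb P^2(\mathbb R)\}$. Local notation. For $p\in\mathbb P^2(\mathbb R)$, affine coordinates centered at $p$ are obtained by an invertible real linear change of coordinates sending $p$ to $(0:0:1)$ followed by setting $z=1$; $f\in H_4$ becomes $f(x,y)=\sum_{i+j\le4}a_{ij}x^iy^j=f_0+\dots+f_4$ ($f_k$ homogeneous of degree $k$), and $\operatorname{ord}_p(f)$ is the least $k$ with $f_k\ne0$. For $\operatorname{ord}_pf\ge2$ put $\tilde f(x,y)=f(x,xy)/x^2=f_2(1,y)+xf_3(1,y)+x^2f_4(1,y)$. The discriminant of $f$ at $p$ is $D_f(y)=(f_3^2-4f_2f_4)(1,y)\in\mathbb R[y]$ (the discriminant of $\tilde f$ viewed as a quadratic polynomial in $x$). With coordinates centered at $p$ and $l=\{y=0\}$: $F_{(p,l)}=\{f\in P_{3,4}: f(p)=0,\ \tilde f(0,0)=0\}$ and $I_{(p,l)}=\{f\in H_4: a_{00}=a_{10}=a_{01}=a_{20}=a_{11}=a_{30}=0\}$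 (equivalently $\operatorname{ord}_pf\ge2$ and $\operatorname{ord}_{(0,0)}\tilde f\ge2$). *)

theory Defs
  imports "HOL-Analysis.Analysis" "HOL-Computational_Algebra.Polynomial"
begin

text \<open>A real ternary quartic written in local coordinates (u1,u2,u3) = (x,y,z):
  the coefficient a i j is the coefficient of x^i y^j z^(4-i-j); in the
  affine chart z = 1 this is the local polynomial sum a_ij x^i y^j.\<close>

definition quartic :: "(nat \<Rightarrow> nat \<Rightarrow> real) \<Rightarrow> real^3 \<Rightarrow> real" where
  "quartic a u = (\<Sum>i\<le>4. \<Sum>j\<le>4 - i. a i j * (u$1)^i * (u$2)^j * (u$3)^(4 - i - j))"

definition local_ord :: "(nat \<Rightarrow> nat \<Rightarrow> real) \<Rightarrow> nat" where
  "local_ord a = (LEAST k. \<exists>i j. i + j = k \<and> i + j \<le> 4 \<and> a i j \<noteq> 0)"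

text \<open>f_k(1,y) as a univariate polynomial in y.\<close>
definition hom_part :: "(nat \<Rightarrow> nat \<Rightarrow> real) \<Rightarrow> nat \<Rightarrow> real poly" where
  "hom_part a k = (\<Sum>j\<le>k. monom (a (k - j) j) j)"

definition discr :: "(nat \<Rightarrow> nat \<Rightarrow> real) \<Rightarrow> real poly" where
  "discr a = (hom_part a 3)^2 - 4 * hom_part a 2 * hom_part a 4"

definition form_of :: "(real^3 \<Rightarrow> real^3) \<Rightarrow> (nat \<Rightarrow> nat \<Rightarrow> real) \<Rightarrow> real^3 \<Rightarrow> real" where
  "form_of T a v = quartic a (T v)"

text \<open>f in F_(p,l): nonnegative on P^2, f(p)=0, tilde f(0,0) = f_2(1,0) = a_20 = 0.\<close>
definition in_F :: "(real^3 \<Rightarrow> real^3) \<Rightarrow> (nat \<Rightarrow> nat \<Rightarrow> real) \<Rightarrow> bool" where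
  "in_F T a \<longleftrightarrow> (\<forall>v. form_of T a v \<ge> 0) \<and> a 0 0 = 0 \<and> a 2 0 = 0"

definition in_I :: "(nat \<Rightarrow> nat \<Rightarrow> real) \<Rightarrow> bool" where
  "in_I b \<longleftrightarrow> b 0 0 = 0 \<and> b 1 0 = 0 \<and> b 0 1 = 0 \<and> b 2 0 = 0 \<and> b 1 1 = 0 \<and> b 3 0 = 0"

end

theory Submission
  imports Defs
begin

(* In the affine chart centered at p write f(x,y) = sum a_ij x^i y^j.  Since
   f >= 0, f(p) = 0, ord_p f = 2 and a20 = 0, nonnegativity along the tangent line and
   along the blow-up of p forces a30 = a11 = 0 as well, so f satisfies the same vanishing
   conditions as g in I_(p,l).  For such coefficients, giving x weight 1 and y weight 2,
   f(x,y) = q(y, x^2) + (terms of weight > 4), with q(Y,W) = a02 Y^2 + a21 Y W + a40 W^2.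
   A weighted blow-up shows q is positive semidefinite, and D_f''(0) = 2 (a21^2 - 4 a02 a40)
   is nonzero, so q is positive definite: q(Y,W) >= c0 (Y^2 + W^2).  Thus near p
   f >= (c0/2) (y^2 + x^4), while |g| <= C (y^2 + x^4); a small eps then makes f + eps g >= 0
   on a box in the chart, and homogeneity carries this to an open neighbourhood of p.
   The file develops, in order: the local chart and coefficient algebra; consequences of
   nonnegativity; binary quadratic forms; weighted estimates; the local perturbation
   estimate; the passage back to P^2; and finally the theorem. *)

definition local_poly :: "(nat \<Rightarrow> nat \<Rightarrow> real) \<Rightarrow> real \<Rightarrow> real \<Rightarrow> real" where
  "local_poly c x y = quartic c (vector [x, y, 1])"

(* The binary quadratic form q(Y,W) = a02 Y^2 + a21 Y W + a40 W^2; q(y,x^2) is the part of f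
   of lowest weight when x has weight 1 and y has weight 2. *)
definition principal :: "(nat \<Rightarrow> nat \<Rightarrow> real) \<Rightarrow> real \<Rightarrow> real \<Rightarrow> real" where
  "principal c Y W = c 0 2 * Y^2 + c 2 1 * Y * W + c 4 0 * W^2"

(* The monomials of weighted degree above 4 that remain once the coefficients listed in
   I_(p,l) vanish. *)
definition higher_terms :: "(nat \<Rightarrow> nat \<Rightarrow> real) \<Rightarrow> real \<Rightarrow> real \<Rightarrow> real" where
  "higher_terms c x y = c 1 2 * x * y^2 + c 0 3 * y^3 + c 3 1 * x^3 * y
     + c 2 2 * x^2 * y^2 + c 1 3 * x * y^3 + c 0 4 * y^4"

(* Sum of the absolute values of the coefficients that can be nonzero for a form in I_(p,l). *)
definition coeff_bound :: "(nat \<Rightarrow> nat \<Rightarrow> real) \<Rightarrow> real" where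
  "coeff_bound c = \<bar>c 0 2\<bar> + \<bar>c 2 1\<bar> + \<bar>c 4 0\<bar> + \<bar>c 1 2\<bar> + \<bar>c 0 3\<bar> + \<bar>c 3 1\<bar>
     + \<bar>c 2 2\<bar> + \<bar>c 1 3\<bar> + \<bar>c 0 4\<bar>"

lemma quartic_expand:
  "quartic c u = c 0 0 * (u$3)^4 + c 1 0 * (u$1) * (u$3)^3 + c 0 1 * (u$2) * (u$3)^3
    + c 2 0 * (u$1)^2 * (u$3)^2 + c 1 1 * (u$1) * (u$2) * (u$3)^2 + c 0 2 * (u$2)^2 * (u$3)^2
    + c 3 0 * (u$1)^3 * (u$3) + c 2 1 * (u$1)^2 * (u$2) * (u$3) + c 1 2 * (u$1) * (u$2)^2 * (u$3)
    + c 0 3 * (u$2)^3 * (u$3)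
    + c 4 0 * (u$1)^4 + c 3 1 * (u$1)^3 * (u$2) + c 2 2 * (u$1)^2 * (u$2)^2
    + c 1 3 * (u$1) * (u$2)^3 + c 0 4 * (u$2)^4"
  unfolding quartic_def by (simp add: numeral_eq_Suc atMost_Suc algebra_simps)

lemma local_poly_expand:
  "local_poly c x y = c 0 0 + c 1 0 * x + c 0 1 * y + c 2 0 * x^2 + c 1 1 * x * y + c 0 2 * y^2
    + c 3 0 * x^3 + c 2 1 * x^2 * y + c 1 2 * x * y^2 + c 0 3 * y^3
    + c 4 0 * x^4 + c 3 1 * x^3 * y + c 2 2 * x^2 * y^2 + c 1 3 * x * y^3 + c 0 4 * y^4"
  unfolding local_poly_def quartic_expand by simp

lemma quartic_dehomogenize:
  assumes "u$3 \<noteq> 0"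
  shows "quartic c u = (u$3)^4 * local_poly c (u$1 / u$3) (u$2 / u$3)"
  using assms unfolding quartic_expand local_poly_expand
  by (simp add: field_simps power_divide eval_nat_numeral)

lemma quartic_lincomb:
  "quartic (\<lambda>i j. a i j + \<epsilon> * b i j) u = quartic a u + \<epsilon> * quartic b u"
  unfolding quartic_def by (simp add: algebra_simps sum.distrib sum_distrib_left)

lemma in_F_local_poly_nonneg:
  assumes "bij T" and "in_F T a"
  shows "local_poly a x y \<ge> 0"
proof -
  have "T (inv T (vector [x, y, 1])) = vector [x, y, 1]"
    using assms(1) by (simp add: bij_is_surj surj_f_inv_f)
  then have "local_poly a x y = form_of T a (inv T (vector [x, y, 1]))"
    by (simp add: form_of_def local_poly_def)
  then show ?thesis using assms(2) unfolding in_F_def by simp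
qed

lemma local_ord_linear_terms:
  assumes "local_ord a = 2"
  shows "a 1 0 = 0" and "a 0 1 = 0"
proof -
  have "local_ord a \<le> i + j" if "i + j \<le> 4" "a i j \<noteq> 0" for i j
    unfolding local_ord_def using that by (intro Least_le) blast
  from this[of 1 0] this[of 0 1] show "a 1 0 = 0" "a 0 1 = 0" using assms by auto
qed

lemma local_poly_split:
  assumes "in_I c"
  shows "local_poly c x y = principal c y (x^2) + higher_terms c x y"
  using assms unfolding in_I_def local_poly_expand principal_def higher_terms_def
  by (simp add: algebra_simps power2_eq_square eval_nat_numeral)

lemma discr_second_derivative:
  "poly (pderiv (pderiv (discr a))) 0 =
     2 * ((2 * a 3 0 * a 1 2 + (a 2 1)^2) - 4 * (a 2 0 * a 2 2 + a 1 1 * a 3 1 + a 0 2 * a 4 0))"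
proof -
  have "coeff (hom_part a k) n = (if n \<le> k then a (k - n) n else 0)" for k n
    unfolding hom_part_def by (simp add: coeff_sum)
  then show ?thesis
    by (simp add: poly_0_coeff_0 coeff_pderiv discr_def coeff_diff coeff_mult power2_eq_square
        numeral_mult_conv_smult mult.assoc numeral_eq_Suc atMost_Suc algebra_simps)
qed

lemma nonneg_at_limit:
  fixes \<phi> :: "real \<Rightarrow> real"
  assumes "isCont \<phi> 0" and "\<And>s. s \<noteq> 0 \<Longrightarrow> \<phi> s \<ge> 0"
  shows "\<phi> 0 \<ge> 0"
proof (rule tendsto_lowerbound)
  show "(\<phi> \<longlongrightarrow> \<phi> 0) (at 0)" using assms(1) isCont_def by blast
  show "\<forall>\<^sub>F s in at 0. 0 \<le> \<phi> s" using assms(2) by (auto simp: eventually_at_filter)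
qed simp

(* If x (c + d x) >= 0 for all x <> 0 then c = 0: otherwise the product changes sign at 0. *)
lemma nonneg_linear_factor:
  fixes c d :: real
  assumes "\<And>x. x \<noteq> 0 \<Longrightarrow> x * (c + d * x) \<ge> 0"
  shows "c = 0"
proof (rule ccontr)
  assume c: "c \<noteq> 0"
  define s where "s = 1 / (\<bar>d\<bar> + 1)"
  have s: "s > 0" unfolding s_def by simp
  have "d * s \<le> \<bar>d\<bar> * s" using s by (simp add: mult_right_mono)
  also have "\<bar>d\<bar> * s < 1" unfolding s_def by (simp add: field_simps)
  finally have "c^2 * (s * (1 - d * s)) > 0" using c s by simp
  moreover have "(- c * s) * (c + d * (- c * s)) = - (c^2 * (s * (1 - d * s)))"
    by (simp add: algebra_simps power2_eq_square)
  moreover have "- c * s \<noteq> 0" using c s by simp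
  ultimately show False using assms[of "- c * s"] by linarith
qed

(* Nonnegativity along the tangent line y = 0, where f = x^3 (a30 + a40 x), forces a30 = 0. *)
lemma nonneg_cubic_coeff_vanishes:
  assumes nonneg: "\<And>x y. local_poly a x y \<ge> 0"
    and low: "a 0 0 = 0" "a 1 0 = 0" "a 0 1 = 0" "a 2 0 = 0"
  shows "a 3 0 = 0"
proof (rule nonneg_linear_factor)
  fix x :: real assume x: "x \<noteq> 0"
  have "local_poly a x 0 = x^2 * (x * (a 3 0 + a 4 0 * x))"
    unfolding local_poly_expand using low by (simp add: algebra_simps eval_nat_numeral)
  then have "x^2 * (x * (a 3 0 + a 4 0 * x)) \<ge> 0" using nonneg by metis
  then show "x * (a 3 0 + a 4 0 * x) \<ge> 0" using x by (simp add: zero_le_mult_iff)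
qed

(* Blowing up at p along lines y = t x: f(x, t x) / x^2 tends to t (a11 + a02 t),
   which must be nonnegative, so a11 = 0. *)
lemma nonneg_mixed_coeff_vanishes:
  assumes nonneg: "\<And>x y. local_poly a x y \<ge> 0"
    and low: "a 0 0 = 0" "a 1 0 = 0" "a 0 1 = 0" "a 2 0 = 0"
  shows "a 1 1 = 0"
proof (rule nonneg_linear_factor)
  fix t :: real
  define \<phi> where "\<phi> = (\<lambda>s. t * (a 1 1 + a 0 2 * t)
     + s * (a 3 0 + a 2 1 * t + a 1 2 * t^2 + a 0 3 * t^3)
     + s^2 * (a 4 0 + a 3 1 * t + a 2 2 * t^2 + a 1 3 * t^3 + a 0 4 * t^4))"
  have "\<phi> 0 \<ge> 0"
  proof (rule nonneg_at_limit)
    show "isCont \<phi> 0" unfolding \<phi>_def by (intro continuous_intros)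
    fix s :: real assume s: "s \<noteq> 0"
    have "local_poly a s (t * s) = s^2 * \<phi> s"
      unfolding local_poly_expand \<phi>_def using low by (simp add: algebra_simps eval_nat_numeral)
    then have "s^2 * \<phi> s \<ge> 0" using nonneg by metis
    then show "\<phi> s \<ge> 0" using s by (simp add: zero_le_mult_iff)
  qed
  then show "t * (a 1 1 + a 0 2 * t) \<ge> 0" unfolding \<phi>_def by simp
qed

lemma nonneg_in_I:
  assumes "\<And>x y. local_poly a x y \<ge> 0"
    and "a 0 0 = 0" "a 1 0 = 0" "a 0 1 = 0" "a 2 0 = 0"
  shows "in_I a"
  using assms nonneg_cubic_coeff_vanishes nonneg_mixed_coeff_vanishes unfolding in_I_def by blast

(* q(Y,W) is even, so nonnegativity for W >= 0 extends to all W. *)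
lemma principal_symmetric: "principal c (- Y) (- W) = principal c Y W"
  unfolding principal_def by simp

(* Weighted blow-up x = s w, y = s^2 Y: f / s^4 tends to q(Y, w^2), so q is nonnegative
   for W >= 0, and by symmetry everywhere. *)
lemma nonneg_principal:
  assumes nonneg: "\<And>x y. local_poly a x y \<ge> 0" and I: "in_I a"
  shows "principal a Y W \<ge> 0"
proof -
  have "principal a Y (w^2) \<ge> 0" for Y w
  proof -
    define \<psi> where "\<psi> = (\<lambda>s. principal a Y (w^2) + s * (a 1 2 * w * Y^2 + a 3 1 * w^3 * Y)
       + s^2 * (a 0 3 * Y^3 + a 2 2 * w^2 * Y^2) + s^3 * (a 1 3 * w * Y^3) + s^4 * (a 0 4 * Y^4))"
    have "\<psi> 0 \<ge> 0"
    proof (rule nonneg_at_limit)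
      show "isCont \<psi> 0" unfolding \<psi>_def by (intro continuous_intros)
      fix s :: real assume s: "s \<noteq> 0"
      have "local_poly a (s * w) (s^2 * Y) = s^4 * \<psi> s"
        unfolding local_poly_split[OF I] principal_def higher_terms_def \<psi>_def
        by (simp add: algebra_simps eval_nat_numeral)
      then have "s^4 * \<psi> s \<ge> 0" using nonneg by metis
      then show "\<psi> s \<ge> 0" using s by (simp add: zero_le_mult_iff)
    qed
    then show ?thesis unfolding \<psi>_def by simp
  qed
  from this[of Y "sqrt W"] this[of "- Y" "sqrt (- W)"] show ?thesis
    by (cases "W \<ge> 0") (simp_all add: principal_symmetric)
qed

lemma psd_binary_form_discriminant:
  fixes A B C :: real
  assumes psd: "\<And>Y W. A * Y^2 + B * Y * W + C * W^2 \<ge> 0"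
  shows "B^2 \<le> 4 * A * C"
proof -
  have "C * (4 * A * C - B^2) \<ge> 0" and "A * (4 * A * C - B^2) \<ge> 0"
    using psd[of "2 * C" "- B"] psd[of B "- 2 * A"] by (simp_all add: algebra_simps power2_eq_square)
  moreover have "A \<ge> 0" "C \<ge> 0" using psd[of 1 0] psd[of 0 1] by simp_all
  moreover have "B = 0" if "A = 0" "C = 0"
  proof -
    have "B^2 \<le> 0" using psd[of 1 "- B"] that by (simp add: power2_eq_square)
    then show ?thesis by simp
  qed
  ultimately show ?thesis
    by (cases "A > 0"; cases "C > 0") (auto simp: zero_le_mult_iff)
qed

lemma pd_binary_form_coercive:
  fixes A B C :: real
  assumes psd: "\<And>Y W. A * Y^2 + B * Y * W + C * W^2 \<ge> 0" and nondeg: "B^2 \<noteq> 4 * A * C"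
  shows "\<exists>c>0. \<forall>Y W. A * Y^2 + B * Y * W + C * W^2 \<ge> c * (Y^2 + W^2)"
proof -
  have disc: "4 * A * C - B^2 > 0" using psd_binary_form_discriminant[OF psd] nondeg by simp
  have "A \<ge> 0" "C \<ge> 0" using psd[of 1 0] psd[of 0 1] by simp_all
  with disc have A: "A > 0" and C: "C > 0" by (auto simp: order_le_less)
  define c where "c = (4 * A * C - B^2) / (4 * (A + C))"
  have c: "c > 0" unfolding c_def using disc A C by simp
  have c_eq: "c * (4 * (A + C)) = 4 * A * C - B^2" unfolding c_def using A C by simp
  have "c * (4 * (A + C)) \<le> 4 * A * C" using c_eq by simp
  also have "\<dots> < A * (4 * (A + C))" using A by (simp add: algebra_simps)
  finally have cA: "c < A" using A C by (simp add: mult_less_cancel_right)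
  have shifted: "(A - c) * Y^2 + B * Y * W + (C - c) * W^2 \<ge> 0" for Y W
  proof -
    have "4 * (A - c) * (C - c) = 4 * A * C - c * (4 * (A + C)) + 4 * c^2"
      by (simp add: algebra_simps power2_eq_square)
    then have "(4 * (A - c) * (C - c) - B^2) * W^2 = (2 * c * W)^2"
      using c_eq by (simp add: power_mult_distrib)
    moreover have "4 * (A - c) * ((A - c) * Y^2 + B * Y * W + (C - c) * W^2)
             = (2 * (A - c) * Y + B * W)^2 + (4 * (A - c) * (C - c) - B^2) * W^2"
      by (simp add: algebra_simps power2_eq_square)
    moreover have "(2 * (A - c) * Y + B * W)^2 + (2 * c * W)^2 \<ge> 0" by simp
    ultimately have "4 * (A - c) * ((A - c) * Y^2 + B * Y * W + (C - c) * W^2) \<ge> 0"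
      by linarith
    then show ?thesis using cA by (simp add: zero_le_mult_iff)
  qed
  show ?thesis
    using c shifted by (intro exI[of _ c]) (auto simp: algebra_simps)
qed

lemma abs_bound_product:
  fixes k u r S \<delta> :: real
  assumes "\<bar>u\<bar> \<le> S" and "\<bar>r\<bar> \<le> \<delta>"
  shows "\<bar>k * u * r\<bar> \<le> \<bar>k\<bar> * \<delta> * S"
proof -
  have "\<bar>k * u * r\<bar> = \<bar>k\<bar> * (\<bar>u\<bar> * \<bar>r\<bar>)" by (simp add: abs_mult)
  also have "\<dots> \<le> \<bar>k\<bar> * (S * \<delta>)" using assms by (intro mult_left_mono mult_mono) auto
  finally show ?thesis by (simp add: algebra_simps)
qed

lemma abs_mult_le_sum_squares:
  fixes Y W :: real
  shows "\<bar>Y * W\<bar> \<le> Y^2 + W^2"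
proof -
  have "0 \<le> (\<bar>Y\<bar> - \<bar>W\<bar>)^2" by simp
  then have "2 * \<bar>Y * W\<bar> \<le> Y^2 + W^2" by (simp add: abs_mult power2_eq_square algebra_simps)
  then show ?thesis by simp
qed

lemma principal_bound: "\<bar>principal c Y W\<bar> \<le> coeff_bound c * (Y^2 + W^2)"
proof -
  have split: "principal c Y W = c 0 2 * Y^2 * 1 + c 2 1 * (Y * W) * 1 + c 4 0 * W^2 * 1"
    unfolding principal_def by (simp add: algebra_simps)
  have "\<bar>principal c Y W\<bar> \<le> \<bar>c 0 2\<bar> * 1 * (Y^2 + W^2) + \<bar>c 2 1\<bar> * 1 * (Y^2 + W^2)
      + \<bar>c 4 0\<bar> * 1 * (Y^2 + W^2)"
    using abs_bound_product[of "Y^2" "Y^2 + W^2" 1 1 "c 0 2"]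
      abs_bound_product[OF abs_mult_le_sum_squares[of Y W], of 1 1 "c 2 1"]
      abs_bound_product[of "W^2" "Y^2 + W^2" 1 1 "c 4 0"]
    unfolding split abs_le_iff by simp
  also have "\<dots> \<le> coeff_bound c * (Y^2 + W^2)"
    unfolding coeff_bound_def by (simp add: algebra_simps)
  finally show ?thesis .
qed

lemma higher_terms_bound:
  fixes x y \<delta> :: real
  assumes x: "\<bar>x\<bar> \<le> \<delta>" and y: "\<bar>y\<bar> \<le> \<delta>" and \<delta>: "\<delta> \<le> 1"
  shows "\<bar>higher_terms c x y\<bar> \<le> \<delta> * coeff_bound c * (y^2 + (x^2)^2)"
proof -
  define S where "S = y^2 + (x^2)^2"
  have Y: "\<bar>y^2\<bar> \<le> S" and YW: "\<bar>x^2 * y\<bar> \<le> S"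
    using abs_mult_le_sum_squares[of "x^2" y] unfolding S_def by (auto simp: algebra_simps)
  have unit: "\<bar>x\<bar> \<le> 1" "\<bar>y\<bar> \<le> 1" using x y \<delta> by auto
  have "\<bar>x\<bar> * \<bar>x\<bar> \<le> 1 * \<delta>" "\<bar>x\<bar> * \<bar>y\<bar> \<le> 1 * \<delta>" "\<bar>y\<bar> * \<bar>y\<bar> \<le> 1 * \<delta>"
    by (rule mult_mono; use unit x y in simp)+
  then have small: "\<bar>x^2\<bar> \<le> \<delta>" "\<bar>x * y\<bar> \<le> \<delta>" "\<bar>y^2\<bar> \<le> \<delta>"
    by (simp_all add: abs_mult power2_eq_square)
  have split: "higher_terms c x y = c 1 2 * y^2 * x + c 0 3 * y^2 * y + c 3 1 * (x^2 * y) * x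
      + c 2 2 * y^2 * x^2 + c 1 3 * y^2 * (x * y) + c 0 4 * y^2 * y^2"
    unfolding higher_terms_def by (simp add: algebra_simps eval_nat_numeral)
  have "\<bar>higher_terms c x y\<bar> \<le> \<bar>c 1 2\<bar> * \<delta> * S + \<bar>c 0 3\<bar> * \<delta> * S + \<bar>c 3 1\<bar> * \<delta> * S
      + \<bar>c 2 2\<bar> * \<delta> * S + \<bar>c 1 3\<bar> * \<delta> * S + \<bar>c 0 4\<bar> * \<delta> * S"
    using abs_bound_product[OF Y x, of "c 1 2"] abs_bound_product[OF Y y, of "c 0 3"]
      abs_bound_product[OF YW x, of "c 3 1"] abs_bound_product[OF Y small(1), of "c 2 2"]
      abs_bound_product[OF Y small(2), of "c 1 3"] abs_bound_product[OF Y small(3), of "c 0 4"]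
    unfolding split abs_le_iff by linarith
  also have "\<dots> \<le> \<delta> * coeff_bound c * S"
  proof -
    have "S \<ge> 0" "\<delta> \<ge> 0" unfolding S_def using x by auto
    then have "\<bar>k\<bar> * \<delta> * S \<ge> 0" for k by simp
    from this[of "c 0 2"] this[of "c 2 1"] this[of "c 4 0"] show ?thesis
      unfolding coeff_bound_def by (simp add: algebra_simps)
  qed
  finally show ?thesis unfolding S_def .
qed

(* Core estimate: with f >= c0 (y^2 + x^4) up to small terms, and |g| = O(y^2 + x^4) since g
   lies in I_(p,l), a small multiple of g cannot destroy nonnegativity near the origin. *)
lemma local_perturbation:
  assumes Ia: "in_I a" and Ib: "in_I b" and c0: "c0 > 0"
    and coercive: "\<And>Y W. principal a Y W \<ge> c0 * (Y^2 + W^2)"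
  shows "\<exists>\<delta>>0. \<exists>\<epsilon>>0. \<forall>x y. \<bar>x\<bar> \<le> \<delta> \<longrightarrow> \<bar>y\<bar> \<le> \<delta> \<longrightarrow>
           local_poly a x y + \<epsilon> * local_poly b x y \<ge> 0"
proof -
  define Na Nb where "Na = coeff_bound a" and "Nb = coeff_bound b"
  have "Na \<ge> 0" "Nb \<ge> 0" unfolding Na_def Nb_def coeff_bound_def by simp_all
  define \<delta> where "\<delta> = min 1 (c0 / (2 * (Na + 1)))"
  define \<epsilon> where "\<epsilon> = c0 / (4 * (Nb + 1))"
  have \<delta>: "\<delta> > 0" "\<delta> \<le> 1" and \<epsilon>: "\<epsilon> > 0"
    unfolding \<delta>_def \<epsilon>_def using c0 \<open>Na \<ge> 0\<close> \<open>Nb \<ge> 0\<close> by auto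
  have \<delta>Na: "\<delta> * Na \<le> c0 / 2"
  proof -
    have "\<delta> * Na \<le> c0 / (2 * (Na + 1)) * (Na + 1)"
      using \<delta> \<open>Na \<ge> 0\<close> by (intro mult_mono) (auto simp: \<delta>_def)
    also have "\<dots> = c0 / 2" using \<open>Na \<ge> 0\<close> by (simp add: field_simps)
    finally show ?thesis .
  qed
  have \<epsilon>Nb: "\<epsilon> * (2 * Nb) \<le> c0 / 2"
  proof -
    have "\<epsilon> * (2 * Nb) \<le> c0 / (4 * (Nb + 1)) * (2 * (Nb + 1))"
      using \<open>Nb \<ge> 0\<close> c0 unfolding \<epsilon>_def by (intro mult_left_mono) auto
    also have "\<dots> = c0 / 2" using \<open>Nb \<ge> 0\<close> by (simp add: field_simps)
    finally show ?thesis .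
  qed
  have "local_poly a x y + \<epsilon> * local_poly b x y \<ge> 0" if x: "\<bar>x\<bar> \<le> \<delta>" and y: "\<bar>y\<bar> \<le> \<delta>" for x y
  proof -
    define S where "S = y^2 + (x^2)^2"
    have "S \<ge> 0" unfolding S_def by simp
    have "local_poly a x y \<ge> c0 * S - \<delta> * Na * S"
      using coercive[of y "x^2"] higher_terms_bound[OF x y \<delta>(2), of a]
      unfolding local_poly_split[OF Ia] S_def Na_def by linarith
    moreover have "\<bar>local_poly b x y\<bar> \<le> 2 * Nb * S"
    proof -
      have "\<bar>local_poly b x y\<bar> \<le> Nb * S + \<delta> * Nb * S"
        using principal_bound[of b y "x^2"] higher_terms_bound[OF x y \<delta>(2), of b]
        unfolding local_poly_split[OF Ib] S_def Nb_def by linarith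
      also have "\<delta> * Nb * S \<le> 1 * Nb * S"
        using \<delta>(2) \<open>S \<ge> 0\<close> \<open>Nb \<ge> 0\<close> by (intro mult_right_mono) auto
      finally show ?thesis by simp
    qed
    then have "\<epsilon> * (- (2 * Nb * S)) \<le> \<epsilon> * local_poly b x y"
      using \<epsilon> by (intro mult_left_mono) auto
    then have "\<epsilon> * local_poly b x y \<ge> - (\<epsilon> * (2 * Nb) * S)" by (simp add: algebra_simps)
    moreover have "\<delta> * Na * S \<le> c0 / 2 * S" "\<epsilon> * (2 * Nb) * S \<le> c0 / 2 * S"
      using mult_right_mono[OF \<delta>Na \<open>S \<ge> 0\<close>] mult_right_mono[OF \<epsilon>Nb \<open>S \<ge> 0\<close>] by simp_all
    ultimately show ?thesis by linarith
  qed
  then show ?thesis using \<delta> \<epsilon> by blast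
qed

(* A form whose dehomogenization is nonnegative on a box around the origin of the chart is
   nonnegative on an open neighbourhood of p, namely the cone over that box. *)
lemma chart_neighbourhood:
  fixes T :: "real^3 \<Rightarrow> real^3"
  assumes T: "linear T" and p: "T p = vector [0, 0, 1]" and \<delta>: "\<delta> > 0"
    and nonneg: "\<And>x y. \<bar>x\<bar> \<le> \<delta> \<Longrightarrow> \<bar>y\<bar> \<le> \<delta> \<Longrightarrow> local_poly c x y \<ge> 0"
  shows "\<exists>U. open U \<and> p \<in> U \<and> (\<forall>v\<in>U. form_of T c v \<ge> 0)"
proof -
  define U where "U = {v. 0 < T v $ 3 \<and> \<bar>T v $ 1\<bar> < \<delta> * T v $ 3 \<and> \<bar>T v $ 2\<bar> < \<delta> * T v $ 3}"
  have cont: "continuous_on UNIV T"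
    using T by (intro linear_continuous_on) (simp add: linear_conv_bounded_linear)
  have "open U" unfolding U_def
    by (intro open_Collect_conj open_Collect_less continuous_intros cont)
  moreover have "p \<in> U" unfolding U_def using p \<delta> by simp
  moreover have "form_of T c v \<ge> 0" if "v \<in> U" for v
  proof -
    define u where "u = T v"
    have z: "u $ 3 > 0" and "\<bar>u $ 1\<bar> < \<delta> * u $ 3" "\<bar>u $ 2\<bar> < \<delta> * u $ 3"
      using that unfolding U_def u_def by auto
    then have "\<bar>u $ 1 / u $ 3\<bar> \<le> \<delta>" "\<bar>u $ 2 / u $ 3\<bar> \<le> \<delta>"
      using z by (simp_all add: pos_divide_le_eq)
    then have "local_poly c (u $ 1 / u $ 3) (u $ 2 / u $ 3) \<ge> 0" by (rule nonneg)
    then show ?thesis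
      unfolding form_of_def u_def[symmetric] quartic_dehomogenize[OF less_imp_neq[OF z, symmetric]]
      using z by simp
  qed
  ultimately show ?thesis by blast
qed

theorem mainTheorem3:
  fixes T :: "real^3 \<Rightarrow> real^3" and p :: "real^3"
    and a b :: "nat \<Rightarrow> nat \<Rightarrow> real"
  assumes "linear T" and "bij T"
    and "T p = vector [0, 0, 1]"
    and "in_F T a" and "in_I b"
    and "local_ord a = 2"
    and "poly (pderiv (pderiv (discr a))) 0 \<noteq> 0"
  shows "\<exists>U \<epsilon>. open U \<and> p \<in> U \<and> \<epsilon> > 0 \<and>
           (\<forall>v\<in>U. form_of T a v + \<epsilon> * form_of T b v \<ge> 0)"
proof -
  have nonneg: "\<And>x y. local_poly a x y \<ge> 0" using in_F_local_poly_nonneg assms(2,4) .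
  have Ia: "in_I a"
    by (rule nonneg_in_I[OF nonneg])
       (use assms(4) local_ord_linear_terms[OF assms(6)] in \<open>simp_all add: in_F_def\<close>)
  have psd: "\<And>Y W. a 0 2 * Y^2 + a 2 1 * Y * W + a 4 0 * W^2 \<ge> 0"
    using nonneg_principal[OF nonneg Ia] unfolding principal_def .
  have "(a 2 1)^2 \<noteq> 4 * a 0 2 * a 4 0"
    using assms(7) Ia unfolding discr_second_derivative in_I_def by simp
  then obtain c0 where "c0 > 0" and "\<forall>Y W. principal a Y W \<ge> c0 * (Y^2 + W^2)"
    using pd_binary_form_coercive[OF psd] unfolding principal_def by blast
  then obtain \<delta> \<epsilon> where "\<delta> > 0" "\<epsilon> > 0"
    and "\<forall>x y. \<bar>x\<bar> \<le> \<delta> \<longrightarrow> \<bar>y\<bar> \<le> \<delta> \<longrightarrow> local_poly a x y + \<epsilon> * local_poly b x y \<ge> 0"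
    using local_perturbation[OF Ia assms(5)] by blast
  then obtain U where "open U" "p \<in> U" "\<forall>v\<in>U. form_of T (\<lambda>i j. a i j + \<epsilon> * b i j) v \<ge> 0"
    using chart_neighbourhood[OF assms(1,3) \<open>\<delta> > 0\<close>, of "\<lambda>i j. a i j + \<epsilon> * b i j"]
    unfolding local_poly_def quartic_lincomb by blast
  then show ?thesis
    using \<open>\<epsilon> > 0\<close> unfolding form_of_def quartic_lincomb by blast
qed

end
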